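(* There exist constants $c_1,c_2>0$ and $N$ such that for every $n\ge N$ and every integer $k$ with $c_1<k<\frac{1}{3}n-c_2$, the pair $(n,k)$ is not good; that is, there is an $n$-vertex graph all of whose minimum $k$-spanners have girth at most $k+1$.
   Context: All graphs are undirected and unweighted. For a graph $G=(V,E)$ and integer $k$, a $k$-spanner of $G$ is a subgraph $H=(V,E')$, $E'\subseteq E$, with $\mathrm{dist}_H(u,v)\le k\cdot\mathrm{dist}_G(u,v)$ for all $u,v\in V$. A minimum $k$-spanner is a $k$-spanner with the fewest edges. Girth = length of a shortest cycle ($+\infty$ if acyclic). A pair $(n,k)$ is good if for every $n$-vertex graph at least one of its minimum $k$-spanners has girth at least $k+2$. *)

theory Defs
  imports Complex_Main "HOL-Library.Extended_Nat"
begin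

definition is_graph :: "nat \<Rightarrow> nat set set \<Rightarrow> bool" where
  "is_graph n E \<longleftrightarrow> E \<subseteq> {{u, v} | u v. u < n \<and> v < n \<and> u \<noteq> v}"

definition is_walk :: "nat set set \<Rightarrow> nat list \<Rightarrow> bool" where
  "is_walk E xs \<longleftrightarrow> xs \<noteq> [] \<and> (\<forall>i. Suc i < length xs \<longrightarrow> {xs ! i, xs ! Suc i} \<in> E)"

definition dist :: "nat set set \<Rightarrow> nat \<Rightarrow> nat \<Rightarrow> enat" where
  "dist E u v = (INF xs \<in> {xs. is_walk E xs \<and> hd xs = u \<and> last xs = v}. enat (length xs - 1))"

definition is_spanner :: "nat \<Rightarrow> nat \<Rightarrow> nat set set \<Rightarrow> nat set set \<Rightarrow> bool" where
  "is_spanner n k E H \<longleftrightarrow> H \<subseteq> E \<and>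
     (\<forall>u < n. \<forall>v < n. dist H u v \<le> enat k * dist E u v)"

definition is_min_spanner :: "nat \<Rightarrow> nat \<Rightarrow> nat set set \<Rightarrow> nat set set \<Rightarrow> bool" where
  "is_min_spanner n k E H \<longleftrightarrow> is_spanner n k E H \<and>
     (\<forall>H'. is_spanner n k E H' \<longrightarrow> card H \<le> card H')"

definition is_cycle :: "nat set set \<Rightarrow> nat list \<Rightarrow> bool" where
  "is_cycle E xs \<longleftrightarrow> distinct xs \<and> length xs \<ge> 3 \<and>
     (\<forall>i < length xs. {xs ! i, xs ! ((i + 1) mod length xs)} \<in> E)"

text \<open>Girth (infinite for acyclic graphs, since Inf {} = \<infinity> in enat).\<close>
definition girth :: "nat set set \<Rightarrow> enat" where
  "girth E = (INF xs \<in> {xs. is_cycle E xs}. enat (length xs))"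

definition good :: "nat \<Rightarrow> nat \<Rightarrow> bool" where
  "good n k \<longleftrightarrow> (\<forall>E. is_graph n E \<longrightarrow>
     (\<exists>H. is_min_spanner n k E H \<and> girth H \<ge> enat (k + 2)))"

end

theory Submission
  imports Defs
begin

text \<open>Draw \<open>K\<^sub>5\<close> as a pentagon with its five chords. Subdivide each side into a path of
  length \<open>t\<close> and each chord into a path of length \<open>L \<ge> 2 t + 1\<close>, and let \<open>k = L + 3 t - 2\<close>.
  Deleting the first edge of every chord path leaves a \<open>k\<close>-spanner, because each such edge
  has a detour of length \<open>2 t + L - 1\<close> around two sides and back along its own chord; so a
  minimum \<open>k\<close>-spanner misses at least five edges. On the other hand, an integer potential that
  changes by at most 1 along the edges of a \<open>k\<close>-spanner changes by at most \<open>k\<close> along every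
  edge of the graph. Well-chosen potentials show that a \<open>k\<close>-spanner missing a side edge
  misses at most one edge per path, no chord together with one of the two sides it spans,
  and never three consecutive sides; hence it misses at most four edges. So every minimum
  \<open>k\<close>-spanner contains the whole subdivided pentagon, a cycle of length \<open>5 t \<le> k + 1\<close>.\<close>

section \<open>Walks, distances and spanners\<close>

lemma is_walk_singleton [simp]: "is_walk E [x]"
  unfolding is_walk_def by auto

lemma is_walk_Cons_Cons: "is_walk E (x # y # xs) \<longleftrightarrow> {x, y} \<in> E \<and> is_walk E (y # xs)"
  unfolding is_walk_def
proof safe
  fix i
  assume h: "\<forall>i. Suc i < length (x # y # xs) \<longrightarrow> {(x # y # xs) ! i, (x # y # xs) ! Suc i} \<in> E"
  show "{x, y} \<in> E" using h[rule_format, of 0] by simp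
  assume "Suc i < length (y # xs)"
  then show "{(y # xs) ! i, (y # xs) ! Suc i} \<in> E" using h[rule_format, of "Suc i"] by simp
next
  fix i
  assume "{x, y} \<in> E" "\<forall>i. Suc i < length (y # xs) \<longrightarrow> {(y # xs) ! i, (y # xs) ! Suc i} \<in> E"
    and "Suc i < length (x # y # xs)"
  then show "{(x # y # xs) ! i, (x # y # xs) ! Suc i} \<in> E" by (cases i) auto
qed

lemma is_walk_not_Nil: "is_walk E xs \<Longrightarrow> xs \<noteq> []"
  unfolding is_walk_def by auto

lemma is_walk_append:
  "is_walk E xs \<Longrightarrow> is_walk E ys \<Longrightarrow> last xs = hd ys \<Longrightarrow> is_walk E (xs @ tl ys)"
proof (induction xs rule: induct_list012)
  case 1
  then show ?case by (simp add: is_walk_def)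
next
  case (2 x)
  then show ?case by (cases ys) auto
next
  case (3 x y zs)
  then show ?case by (simp add: is_walk_Cons_Cons)
qed

lemma is_walk_join:
  assumes "is_walk E xs" "is_walk E ys" "last xs = hd ys"
  shows "is_walk E (xs @ tl ys)" "hd (xs @ tl ys) = hd xs" "last (xs @ tl ys) = last ys"
    and "length (xs @ tl ys) - 1 = (length xs - 1) + (length ys - 1)"
proof -
  have ne: "xs \<noteq> []" "ys \<noteq> []"
    using assms is_walk_not_Nil by auto
  show "is_walk E (xs @ tl ys)"
    using is_walk_append[OF assms] .
  show "hd (xs @ tl ys) = hd xs"
    using ne by simp
  show "last (xs @ tl ys) = last ys"
    using ne assms(3) by (cases ys) auto
  show "length (xs @ tl ys) - 1 = (length xs - 1) + (length ys - 1)"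
    using ne by (cases xs; cases ys) auto
qed

lemma is_walk_rev:
  assumes "is_walk E xs"
  shows "is_walk E (rev xs)"
  unfolding is_walk_def
proof (intro conjI allI impI)
  show "rev xs \<noteq> []"
    using assms by (simp add: is_walk_def)
  fix i
  assume i: "Suc i < length (rev xs)"
  let ?j = "length xs - Suc (Suc i)"
  have "{xs ! ?j, xs ! Suc ?j} \<in> E"
    using assms i unfolding is_walk_def by auto
  moreover have "rev xs ! i = xs ! Suc ?j" "rev xs ! Suc i = xs ! ?j"
    using i by (auto simp: rev_nth Suc_diff_Suc)
  ultimately show "{rev xs ! i, rev xs ! Suc i} \<in> E"
    by (simp add: insert_commute)
qed

lemma is_walk_map_upt:
  assumes "a \<le> b" and "\<And>i. a \<le> i \<Longrightarrow> i < b \<Longrightarrow> {f i, f (Suc i)} \<in> E"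
  shows "is_walk E (map f [a..<Suc b])"
  using assms unfolding is_walk_def by (auto simp del: upt_Suc)

lemma dist_le_walk:
  "is_walk E xs \<Longrightarrow> dist E (hd xs) (last xs) \<le> enat (length xs - 1)"
  unfolding dist_def by (rule INF_lower2[of xs]) auto

lemma walk_if_dist_le:
  assumes "dist E u v \<le> enat m"
  obtains xs where "is_walk E xs" "hd xs = u" "last xs = v" "length xs - 1 \<le> m"
proof -
  let ?S = "{xs. is_walk E xs \<and> hd xs = u \<and> last xs = v}"
  let ?A = "(\<lambda>xs. enat (length xs - 1)) ` ?S"
  have "?A \<noteq> {}"
  proof
    assume "?A = {}"
    then have "dist E u v = \<infinity>"
      unfolding dist_def by (simp add: Inf_enat_def)
    with assms show False by simp
  qed
  then have "Inf ?A \<in> ?A"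
    unfolding Inf_enat_def by (auto intro: LeastI)
  then obtain xs where "xs \<in> ?S" "Inf ?A = enat (length xs - 1)"
    by auto
  with assms show thesis
    unfolding dist_def by (intro that) auto
qed

lemma dist_commute: "dist E u v = dist E v u"
proof -
  have "dist E u v \<le> dist E v u" for u v
    unfolding dist_def[of E v u]
  proof (rule INF_greatest)
    fix xs
    assume "xs \<in> {xs. is_walk E xs \<and> hd xs = v \<and> last xs = u}"
    then show "dist E u v \<le> enat (length xs - 1)"
      using dist_le_walk[OF is_walk_rev[of E xs]] by (simp add: hd_rev last_rev)
  qed
  then show ?thesis
    by (simp add: antisym)
qed

lemma dist_triangle: "dist E u w \<le> dist E u v + dist E v w"
proof (cases "dist E u v = \<infinity> \<or> dist E v w = \<infinity>")
  case True
  then show ?thesis by auto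
next
  case False
  then obtain a b where ab: "dist E u v = enat a" "dist E v w = enat b"
    by auto
  obtain xs where xs: "is_walk E xs" "hd xs = u" "last xs = v" "length xs - 1 \<le> a"
    using walk_if_dist_le[of E u v a] ab by auto
  obtain ys where ys: "is_walk E ys" "hd ys = v" "last ys = w" "length ys - 1 \<le> b"
    using walk_if_dist_le[of E v w b] ab by auto
  have "dist E u w \<le> enat (length (xs @ tl ys) - 1)"
    using dist_le_walk[of E "xs @ tl ys"] is_walk_join[OF xs(1) ys(1)] xs ys by simp
  also have "\<dots> \<le> enat (a + b)"
    using is_walk_join(4)[OF xs(1) ys(1)] xs ys by simp
  finally show ?thesis
    using ab by simp
qed

lemma dist_le_stretched_walk:
  assumes short: "\<And>a b. {a, b} \<in> E \<Longrightarrow> dist H a b \<le> enat k"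
  shows "is_walk E xs \<Longrightarrow> dist H (hd xs) (last xs) \<le> enat (k * (length xs - 1))"
proof (induction xs rule: induct_list012)
  case 1
  then show ?case by (simp add: is_walk_def)
next
  case (2 x)
  then show ?case
    using dist_le_walk[of H "[x]"] by simp
next
  case (3 x y zs)
  then have "dist H x y \<le> enat k" "dist H y (last (y # zs)) \<le> enat (k * length zs)"
    using short by (auto simp: is_walk_Cons_Cons)
  then have "dist H x (last (y # zs)) \<le> enat k + enat (k * length zs)"
    using dist_triangle[of H x "last (y # zs)" y] add_mono order_trans by blast
  then show ?case
    by simp
qed

lemma is_spannerI_edgewise:
  assumes "H \<subseteq> E" and "k > 0"
    and short: "\<And>a b. {a, b} \<in> E \<Longrightarrow> dist H a b \<le> enat k"
  shows "is_spanner n k E H"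
  unfolding is_spanner_def
proof (intro conjI allI impI \<open>H \<subseteq> E\<close>)
  fix u v
  show "dist H u v \<le> enat k * dist E u v"
  proof (cases "dist E u v")
    case infinity
    then show ?thesis using \<open>k > 0\<close> by (simp add: imult_infinity_right)
  next
    case (enat d)
    then obtain xs where xs: "is_walk E xs" "hd xs = u" "last xs = v" "length xs - 1 \<le> d"
      using walk_if_dist_le[of E u v d] by auto
    have "dist H u v \<le> enat (k * (length xs - 1))"
      using dist_le_stretched_walk[OF short xs(1)] xs by simp
    also have "\<dots> \<le> enat (k * d)"
      using xs(4) by simp
    finally show ?thesis using enat by simp
  qed
qed

lemma walk_potential_bound:
  fixes f :: "nat \<Rightarrow> int"
  assumes lipschitz: "\<And>a b. {a, b} \<in> H \<Longrightarrow> \<bar>f a - f b\<bar> \<le> 1"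
  shows "is_walk H xs \<Longrightarrow> \<bar>f (hd xs) - f (last xs)\<bar> \<le> int (length xs - 1)"
proof (induction xs rule: induct_list012)
  case 1
  then show ?case by (simp add: is_walk_def)
next
  case (2 x)
  then show ?case by simp
next
  case (3 x y zs)
  then have "\<bar>f y - f (last (y # zs))\<bar> \<le> int (length zs)" "\<bar>f x - f y\<bar> \<le> 1"
    using lipschitz by (auto simp: is_walk_Cons_Cons)
  then show ?case by simp
qed

lemma spanner_potential_bound:
  fixes f :: "nat \<Rightarrow> int"
  assumes "is_spanner n k E H" "{u, v} \<in> E" "u < n" "v < n"
    and "\<And>a b. {a, b} \<in> H \<Longrightarrow> \<bar>f a - f b\<bar> \<le> 1"
  shows "\<bar>f u - f v\<bar> \<le> int k"
proof -
  have "dist E u v \<le> enat 1"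
    using dist_le_walk[of E "[u, v]"] assms(2) by (simp add: is_walk_Cons_Cons)
  then have "enat k * dist E u v \<le> enat k"
    using mult_left_mono[of "dist E u v" 1 "enat k"] by (simp add: one_enat_def)
  then have "dist H u v \<le> enat k"
    using assms(1,3,4) unfolding is_spanner_def by (meson order_trans)
  then obtain ys where "is_walk H ys" "hd ys = u" "last ys = v" "length ys - 1 \<le> k"
    by (rule walk_if_dist_le)
  then show ?thesis
    using walk_potential_bound[of H f ys] assms(5) by fastforce
qed

lemma girth_le_cycle: "is_cycle E xs \<Longrightarrow> girth E \<le> enat (length xs)"
  unfolding girth_def by (rule INF_lower) simp

section \<open>The subdivided \<open>K\<^sub>5\<close>\<close>

lemma less_5_cases: "(m::nat) < 5 \<Longrightarrow> m = 0 \<or> m = 1 \<or> m = 2 \<or> m = 3 \<or> m = 4"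
  by arith

lemma less_10_cases:
  "(j::nat) < 10 \<Longrightarrow> j = 0 \<or> j = 1 \<or> j = 2 \<or> j = 3 \<or> j = 4 \<or> j = 5 \<or> j = 6 \<or> j = 7 \<or> j = 8 \<or> j = 9"
  by arith

lemma count_broken_paths_le_4:
  fixes b :: "nat \<Rightarrow> bool"
  assumes chord: "\<And>m. m < 5 \<Longrightarrow> b (5 + m) \<Longrightarrow> \<not> b m \<and> \<not> b ((m + 1) mod 5)"
    and sides: "\<And>m. m < 5 \<Longrightarrow> \<not> (b ((m + 4) mod 5) \<and> b m \<and> b ((m + 1) mod 5))"
    and side: "\<exists>m<5. b m"
  shows "(\<Sum>j<10. of_bool (b j) :: nat) \<le> 4"
proof -
  text \<open>If every pair \<open>{m, 5 + m}\<close> had a member in \<open>b\<close>, then a chord in \<open>b\<close> would force the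
    next chord into \<open>b\<close>; so either all chords are in \<open>b\<close>, contradicting \<open>side\<close>, or all
    sides are, contradicting \<open>sides\<close>.\<close>
  have "\<exists>m<5. \<not> b m \<and> \<not> b (5 + m)"
  proof (rule ccontr)
    assume "\<not> ?thesis"
    then have "b 0 \<or> b 5" "b 1 \<or> b 6" "b 2 \<or> b 7" "b 3 \<or> b 8" "b 4 \<or> b 9"
      by (auto dest: spec[of _ 0] spec[of _ 1] spec[of _ 2] spec[of _ 3] spec[of _ 4])
    moreover have "\<exists>m\<in>{0, 1, 2, 3, 4}. b m"
      using side less_5_cases by auto
    ultimately show False
      using chord[of 0] chord[of 1] chord[of 2] chord[of 3] chord[of 4]
        sides[of 0] sides[of 1] sides[of 2] sides[of 3] sides[of 4]
      by (simp add: numeral_2_eq_2) blast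
  qed
  then obtain m0 where m0: "m0 < 5" "\<not> b m0" "\<not> b (5 + m0)"
    by blast
  define pair :: "nat \<Rightarrow> nat" where "pair m = of_bool (b m) + of_bool (b (5 + m))" for m
  have pair_le: "pair m \<le> 1" if "m < 5" for m
    using chord[OF that] by (auto simp: pair_def)
  have "(\<Sum>j<10. of_bool (b j) :: nat) = (\<Sum>m<5. pair m)"
    by (simp add: pair_def eval_nat_numeral)
  also have "\<dots> = (\<Sum>m\<in>{..<5} - {m0}. pair m)"
    using m0 by (simp add: sum.remove pair_def)
  also have "\<dots> \<le> card ({..<5::nat} - {m0})"
    using sum_bounded_above[of "{..<5} - {m0}" pair 1] pair_le by simp
  also have "\<dots> = 4"
    using m0 by simp
  finally show ?thesis .
qed

text \<open>Vertices \<open>0, \<dots>, 4\<close> are the corners. For \<open>j < 5\<close>, path \<open>j\<close> is the side from corner \<open>j\<close>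
  to corner \<open>j + 1\<close>, and path \<open>5 + m\<close> is the chord from corner \<open>m\<close> to corner \<open>m + 2\<close>
  (mod 5). The inner vertex \<open>i\<close> of path \<open>j\<close> is numbered \<open>path_base j + i\<close>.\<close>

locale subdivided_K5 =
  fixes t L :: nat
  assumes t_pos: "1 \<le> t" and L_ge: "2 * t + 1 \<le> L"
begin

definition stretch :: nat where "stretch = L + 3 * t - 2"

definition path_start :: "nat \<Rightarrow> nat" where
  "path_start j = (if j < 5 then j else j - 5)"

definition path_end :: "nat \<Rightarrow> nat" where
  "path_end j = (if j < 5 then (j + 1) mod 5 else (j + 2) mod 5)"

definition path_len :: "nat \<Rightarrow> nat" where
  "path_len j = (if j < 5 then t else L)"

definition path_base :: "nat \<Rightarrow> nat" where
  "path_base j = (if j < 5 then 5 + j * t else 5 + 5 * t + (j - 5) * L)"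

definition path_vertex :: "nat \<Rightarrow> nat \<Rightarrow> nat" where
  "path_vertex j i =
     (if i = 0 then path_start j else if i = path_len j then path_end j else path_base j + i)"

definition path_edge :: "nat \<Rightarrow> nat \<Rightarrow> nat set" where
  "path_edge j i = {path_vertex j i, path_vertex j (Suc i)}"

definition edges :: "nat set set" where
  "edges = {path_edge j i | j i. j < 10 \<and> i < path_len j}"

definition num_vertices :: nat where
  "num_vertices = 5 + 5 * t + 5 * L"

definition path_of :: "nat \<Rightarrow> nat" where
  "path_of v = (if v < 5 + 5 * t then (v - 5) div t else 5 + (v - 5 - 5 * t) div L)"

definition position_on_path :: "nat \<Rightarrow> nat" where
  "position_on_path v = (if v < 5 + 5 * t then (v - 5) mod t else (v - 5 - 5 * t) mod L)"

lemma L_ge_3: "3 \<le> L"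
  using t_pos L_ge by linarith

lemma path_len_pos: "0 < path_len j"
  using t_pos L_ge_3 by (simp add: path_len_def)

lemma path_start_lt: "j < 10 \<Longrightarrow> path_start j < 5"
  by (auto simp: path_start_def)

lemma path_end_lt: "path_end j < 5"
  by (simp add: path_end_def)

lemma path_vertex_0 [simp]: "path_vertex j 0 = path_start j"
  by (simp add: path_vertex_def)

lemma path_vertex_path_len [simp]: "path_vertex j (path_len j) = path_end j"
  using path_len_pos[of j] by (simp add: path_vertex_def)

lemma path_vertex_internal: "0 < i \<Longrightarrow> i < path_len j \<Longrightarrow> path_vertex j i = path_base j + i"
  by (simp add: path_vertex_def)

lemma internal_vertex_bounds:
  assumes "j < 10" "i < path_len j"
  shows "5 \<le> path_base j + i" "path_base j + i < num_vertices"
    and "path_base j + i < 5 + 5 * t \<longleftrightarrow> j < 5"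
proof -
  have side: "j * t + i < 5 * t" if "j < 5"
  proof -
    have "j * t + i < (j + 1) * t" using assms that by (simp add: path_len_def)
    also have "\<dots> \<le> 5 * t" using that by (intro mult_right_mono) auto
    finally show ?thesis .
  qed
  have chord: "(j - 5) * L + i < 5 * L" if "\<not> j < 5"
  proof -
    have "(j - 5) * L + i < (j - 5 + 1) * L" using assms that by (simp add: path_len_def)
    also have "\<dots> \<le> 5 * L" using that assms(1) by (intro mult_right_mono) auto
    finally show ?thesis .
  qed
  show "5 \<le> path_base j + i"
    by (simp add: path_base_def)
  show "path_base j + i < num_vertices" "path_base j + i < 5 + 5 * t \<longleftrightarrow> j < 5"
    using side chord by (auto simp: path_base_def num_vertices_def)
qed

lemma path_of_internal_vertex:
  assumes "j < 10" "i < path_len j"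
  shows "path_of (path_base j + i) = j" "position_on_path (path_base j + i) = i"
proof -
  have "path_of (path_base j + i) = j \<and> position_on_path (path_base j + i) = i"
  proof (cases "j < 5")
    case True
    then have "path_base j + i - 5 = i + j * t" "i < t"
      using assms by (simp_all add: path_base_def path_len_def)
    then show ?thesis
      using internal_vertex_bounds[OF assms] True by (simp add: path_of_def position_on_path_def)
  next
    case False
    then have "path_base j + i - 5 - 5 * t = i + (j - 5) * L" "i < L"
      using assms by (simp_all add: path_base_def path_len_def)
    then show ?thesis
      using internal_vertex_bounds[OF assms] False by (simp add: path_of_def position_on_path_def)
  qed
  then show "path_of (path_base j + i) = j" "position_on_path (path_base j + i) = i"
    by auto
qed

lemma path_vertex_lt: "j < 10 \<Longrightarrow> i \<le> path_len j \<Longrightarrow> path_vertex j i < num_vertices"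
  using internal_vertex_bounds[of j i] path_start_lt[of j] path_end_lt[of j]
  by (auto simp: path_vertex_def num_vertices_def)

lemma path_edge_in_edges: "j < 10 \<Longrightarrow> i < path_len j \<Longrightarrow> path_edge j i \<in> edges"
  unfolding edges_def by blast

lemma finite_edges: "finite edges"
proof -
  have "edges = (\<lambda>(j, i). path_edge j i) ` (SIGMA j:{..<10}. {..<path_len j})"
    unfolding edges_def by auto
  then show ?thesis by simp
qed

lemma path_vertex_Suc_neq:
  assumes "j < 10" "i < path_len j"
  shows "path_vertex j i \<noteq> path_vertex j (Suc i)"
proof -
  have "path_start j \<noteq> path_end j"
    using less_10_cases[OF assms(1)] by (auto simp: path_start_def path_end_def)
  then show ?thesis
    using assms internal_vertex_bounds[of j i] internal_vertex_bounds[of j "Suc i"]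
      path_start_lt[of j] path_end_lt[of j]
    by (auto simp: path_vertex_def)
qed

lemma is_graph_edges:
  assumes "num_vertices \<le> n"
  shows "is_graph n edges"
  unfolding is_graph_def
proof
  fix e
  assume "e \<in> edges"
  then obtain j i where ji: "j < 10" "i < path_len j" "e = path_edge j i"
    unfolding edges_def by blast
  moreover have "path_vertex j i < n" "path_vertex j (Suc i) < n"
    using path_vertex_lt[of j i] path_vertex_lt[of j "Suc i"] ji assms by auto
  ultimately show "e \<in> {{u, v} |u v. u < n \<and> v < n \<and> u \<noteq> v}"
    using path_vertex_Suc_neq[OF ji(1,2)] unfolding path_edge_def by blast
qed

section \<open>Potentials along a spanner\<close>

definition potential :: "(nat \<Rightarrow> int) \<Rightarrow> (nat \<Rightarrow> nat \<Rightarrow> int) \<Rightarrow> nat \<Rightarrow> int" where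
  "potential \<phi> F v = (if v < 5 then \<phi> v else F (path_of v) (position_on_path v))"

definition fits_corners :: "(nat \<Rightarrow> int) \<Rightarrow> (nat \<Rightarrow> nat \<Rightarrow> int) \<Rightarrow> bool" where
  "fits_corners \<phi> F \<longleftrightarrow> (\<forall>j<10. F j 0 = \<phi> (path_start j) \<and> F j (path_len j) = \<phi> (path_end j))"

definition lipschitz_along :: "nat set set \<Rightarrow> (nat \<Rightarrow> nat \<Rightarrow> int) \<Rightarrow> bool" where
  "lipschitz_along H F \<longleftrightarrow>
     (\<forall>j<10. \<forall>i<path_len j. path_edge j i \<in> H \<longrightarrow> \<bar>F j i - F j (Suc i)\<bar> \<le> 1)"

lemma potential_path_vertex:
  assumes "fits_corners \<phi> F" "j < 10" "i \<le> path_len j"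
  shows "potential \<phi> F (path_vertex j i) = F j i"
proof -
  consider "i = 0" | "i = path_len j" | "0 < i \<and> i < path_len j"
    using assms by linarith
  then show ?thesis
  proof cases
    case 1
    then show ?thesis using assms path_start_lt[of j] by (simp add: potential_def fits_corners_def)
  next
    case 2
    then show ?thesis using assms path_end_lt[of j] by (simp add: potential_def fits_corners_def)
  next
    case 3
    then show ?thesis
      using assms path_of_internal_vertex[of j i] internal_vertex_bounds[of j i]
      by (simp add: potential_def path_vertex_internal)
  qed
qed

lemma spanner_path_potential_bound:
  assumes sp: "is_spanner n stretch edges H" and n: "num_vertices \<le> n"
    and fits: "fits_corners \<phi> F" and lipschitz: "lipschitz_along H F"
    and j: "j < 10" "i < path_len j"
  shows "\<bar>F j i - F j (Suc i)\<bar> \<le> int stretch"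
proof -
  have "\<bar>potential \<phi> F a - potential \<phi> F b\<bar> \<le> 1" if "{a, b} \<in> H" for a b
  proof -
    have "{a, b} \<in> edges"
      using sp that unfolding is_spanner_def by auto
    then obtain j' i' where j'i': "j' < 10" "i' < path_len j'" "{a, b} = path_edge j' i'"
      unfolding edges_def by blast
    then have "\<bar>F j' i' - F j' (Suc i')\<bar> \<le> 1"
      using lipschitz that unfolding lipschitz_along_def by auto
    with j'i' show ?thesis
      using potential_path_vertex[OF fits j'i'(1), of i'] potential_path_vertex[OF fits j'i'(1), of "Suc i'"]
      unfolding path_edge_def by (auto simp: doubleton_eq_iff)
  qed
  moreover have "path_vertex j i < n" "path_vertex j (Suc i) < n"
    using path_vertex_lt[of j i] path_vertex_lt[of j "Suc i"] j n by auto
  ultimately show ?thesis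
    using spanner_potential_bound[OF sp path_edge_in_edges[OF j, unfolded path_edge_def]]
      potential_path_vertex[OF fits j(1)] j(2) by fastforce
qed

definition broken :: "nat set set \<Rightarrow> nat \<Rightarrow> bool" where
  "broken H j \<longleftrightarrow> (\<exists>i<path_len j. path_edge j i \<notin> H)"

lemma spanner_broken_path_bound:
  assumes sp: "is_spanner n stretch edges H" and n: "num_vertices \<le> n"
    and j0: "j0 < 10" "p0 < path_len j0" "path_edge j0 p0 \<notin> H"
    and sign: "\<sigma> = 1 \<or> \<sigma> = -1"
    and cut_at: "\<And>j r. j \<noteq> j0 \<Longrightarrow> cut_at j = Some r \<Longrightarrow> r < path_len j \<and> path_edge j r \<notin> H"
    and slack: "\<And>j. j < 10 \<Longrightarrow> j \<noteq> j0 \<Longrightarrow> cut_at j = None \<Longrightarrow>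
      \<bar>\<phi> (path_start j) - \<phi> (path_end j)\<bar> \<le> int (path_len j)"
  shows "\<bar>\<phi> (path_start j0) - \<phi> (path_end j0) - \<sigma> * (int (path_len j0) - 1)\<bar> \<le> int stretch"
proof -
  text \<open>Extend \<open>\<phi>\<close> along the paths so that it changes by at most 1 across every edge of \<open>H\<close>:
    on \<open>j0\<close> with slope \<open>-\<sigma>\<close> from both ends up to the missing edge \<open>p0\<close>, on a cut path
    constantly on both sides of its missing edge, and on any other path as the minimum of
    the two slope-1 ramps from its ends, which attains both corner values by \<open>slack\<close>.\<close>
  define F where "F j i =
    (if j = j0 then
       (if i \<le> p0 then \<phi> (path_start j) - \<sigma> * int i
        else \<phi> (path_end j) + \<sigma> * (int (path_len j) - int i))
     else case cut_at j of
       Some r \<Rightarrow> if i \<le> r then \<phi> (path_start j) else \<phi> (path_end j)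
     | None \<Rightarrow> min (\<phi> (path_start j) + int i) (\<phi> (path_end j) + int (path_len j) - int i))"
    for j i
  have "fits_corners \<phi> F"
    unfolding fits_corners_def
  proof (intro allI impI conjI)
    fix j :: nat
    assume j: "j < 10"
    show "F j 0 = \<phi> (path_start j)" "F j (path_len j) = \<phi> (path_end j)"
      using slack[OF j] cut_at[of j] j0 by (auto simp: F_def split: option.split)
  qed
  moreover have "lipschitz_along H F"
    unfolding lipschitz_along_def
  proof (intro allI impI)
    fix j i
    assume "j < 10" "i < path_len j" "path_edge j i \<in> H"
    then have "j = j0 \<longrightarrow> i \<noteq> p0" "j \<noteq> j0 \<longrightarrow> cut_at j \<noteq> Some i"
      using j0 cut_at[of j i] by auto
    then show "\<bar>F j i - F j (Suc i)\<bar> \<le> 1"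
      using sign by (auto simp: F_def algebra_simps split: option.split)
  qed
  ultimately have "\<bar>F j0 p0 - F j0 (Suc p0)\<bar> \<le> int stretch"
    using spanner_path_potential_bound[OF sp n] j0 by blast
  moreover have "F j0 p0 - F j0 (Suc p0) =
      \<phi> (path_start j0) - \<phi> (path_end j0) - \<sigma> * (int (path_len j0) - 1)"
    using j0 by (simp add: F_def algebra_simps)
  ultimately show ?thesis by simp
qed

lemma spanner_misses_at_most_one_edge_per_path:
  assumes sp: "is_spanner n stretch edges H" and n: "num_vertices \<le> n"
    and j: "j < 10" and pq: "p < q" "q < path_len j"
    and missing: "path_edge j p \<notin> H" "path_edge j q \<notin> H"
  shows False
proof -
  define F where "F j' i = (if j' = j \<and> p < i \<and> i \<le> q then 0 else int stretch + 1)" for j' i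
  have "fits_corners (\<lambda>_. int stretch + 1) F"
    using pq unfolding fits_corners_def F_def by auto
  moreover have "lipschitz_along H F"
    unfolding lipschitz_along_def
  proof (intro allI impI)
    fix j' i
    assume "path_edge j' i \<in> H"
    then have "j' = j \<longrightarrow> i \<noteq> p \<and> i \<noteq> q"
      using missing by auto
    then show "\<bar>F j' i - F j' (Suc i)\<bar> \<le> 1"
      unfolding F_def by auto
  qed
  ultimately have "\<bar>F j p - F j (Suc p)\<bar> \<le> int stretch"
    using spanner_path_potential_bound[OF sp n _ _ j] pq by fastforce
  then show False
    using pq unfolding F_def by simp
qed

lemma int_stretch: "int stretch = int L + 3 * int t - 2"
  using L_ge_3 by (simp add: stretch_def of_nat_diff)

lemma broken_chord_imp_intact_side:
  assumes sp: "is_spanner n stretch edges H" and n: "num_vertices \<le> n"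
    and m: "m < 5" and chord: "broken H (5 + m)"
  shows "\<not> broken H m"
proof
  assume "broken H m"
  then obtain r where r: "r < path_len m" "path_edge m r \<notin> H"
    by (auto simp: broken_def)
  obtain p where p: "p < path_len (5 + m)" "path_edge (5 + m) p \<notin> H"
    using chord by (auto simp: broken_def)
  text \<open>The corner potentials, listed from corner \<open>m\<close> on, leave slack on every path except
    chord \<open>5 + m\<close> and the cut side \<open>m\<close>, while the chord would need a jump of
    \<open>3 t + L - 1 > stretch\<close> across its missing edge.\<close>
  define \<phi> where "\<phi> b = [0, 3 * int t, 3 * int t, 2 * int t, int t] ! ((b + 5 - m) mod 5)" for b
  have "\<bar>\<phi> (path_start (5 + m)) - \<phi> (path_end (5 + m)) - 1 * (int (path_len (5 + m)) - 1)\<bar>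
      \<le> int stretch"
  proof (rule spanner_broken_path_bound[OF sp n _ p, where cut_at = "\<lambda>j. if j = m then Some r else None"])
    fix j
    assume "j < 10" "j \<noteq> 5 + m" "(if j = m then Some r else None) = None"
    with less_5_cases[OF m] less_10_cases[OF \<open>j < 10\<close>]
    show "\<bar>\<phi> (path_start j) - \<phi> (path_end j)\<bar> \<le> int (path_len j)"
      using L_ge by (elim disjE) (auto simp: \<phi>_def path_start_def path_end_def path_len_def)
  qed (use m r in \<open>auto split: if_splits\<close>)
  then show False
    using less_5_cases[OF m] L_ge
    by (elim disjE) (auto simp: \<phi>_def int_stretch path_start_def path_end_def path_len_def)
qed

lemma broken_chord_imp_intact_next_side:
  assumes sp: "is_spanner n stretch edges H" and n: "num_vertices \<le> n"
    and m: "m < 5" and chord: "broken H (5 + m)"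
  shows "\<not> broken H ((m + 1) mod 5)"
proof
  assume "broken H ((m + 1) mod 5)"
  then obtain r where r: "r < path_len ((m + 1) mod 5)" "path_edge ((m + 1) mod 5) r \<notin> H"
    by (auto simp: broken_def)
  obtain p where p: "p < path_len (5 + m)" "path_edge (5 + m) p \<notin> H"
    using chord by (auto simp: broken_def)
  text \<open>As before, now with the cut on side \<open>m + 1\<close> and the jump in the opposite direction.\<close>
  define \<phi> where "\<phi> b = [3 * int t, 3 * int t, 0, int t, 2 * int t] ! ((b + 5 - m) mod 5)" for b
  have "\<bar>\<phi> (path_start (5 + m)) - \<phi> (path_end (5 + m)) - (-1) * (int (path_len (5 + m)) - 1)\<bar>
      \<le> int stretch"
  proof (rule spanner_broken_path_bound[OF sp n _ p,
        where cut_at = "\<lambda>j. if j = (m + 1) mod 5 then Some r else None"])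
    fix j
    assume "j < 10" "j \<noteq> 5 + m" "(if j = (m + 1) mod 5 then Some r else None) = None"
    with less_5_cases[OF m] less_10_cases[OF \<open>j < 10\<close>]
    show "\<bar>\<phi> (path_start j) - \<phi> (path_end j)\<bar> \<le> int (path_len j)"
      using L_ge by (elim disjE) (auto simp: \<phi>_def path_start_def path_end_def path_len_def)
  qed (use m r in \<open>auto split: if_splits\<close>)
  then show False
    using less_5_cases[OF m] L_ge
    by (elim disjE) (auto simp: \<phi>_def int_stretch path_start_def path_end_def path_len_def)
qed

lemma not_three_consecutive_sides_broken:
  assumes sp: "is_spanner n stretch edges H" and n: "num_vertices \<le> n" and m: "m < 5"
  shows "\<not> (broken H ((m + 4) mod 5) \<and> broken H m \<and> broken H ((m + 1) mod 5))"
proof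
  assume "broken H ((m + 4) mod 5) \<and> broken H m \<and> broken H ((m + 1) mod 5)"
  then obtain r r' r'' where
    r: "r < path_len m" "path_edge m r \<notin> H" and
    r': "r' < path_len ((m + 4) mod 5)" "path_edge ((m + 4) mod 5) r' \<notin> H" and
    r'': "r'' < path_len ((m + 1) mod 5)" "path_edge ((m + 1) mod 5) r'' \<notin> H"
    by (auto simp: broken_def)
  text \<open>With these corner potentials every chord has slack, while side \<open>m\<close> would need a jump
    of \<open>2 L + t - 1 > stretch\<close>.\<close>
  define \<phi> where "\<phi> b = [0, 2 * int L, int L, int L, int L + int t] ! ((b + 5 - m) mod 5)" for b
  define cut_at where "cut_at j =
    (if j = (m + 4) mod 5 then Some r' else if j = (m + 1) mod 5 then Some r'' else None)" for j
  have "\<bar>\<phi> (path_start m) - \<phi> (path_end m) - 1 * (int (path_len m) - 1)\<bar> \<le> int stretch"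
  proof (rule spanner_broken_path_bound[OF sp n _ r, where cut_at = cut_at])
    fix j
    assume "j < 10" "j \<noteq> m" "cut_at j = None"
    with less_5_cases[OF m] less_10_cases[OF \<open>j < 10\<close>]
    show "\<bar>\<phi> (path_start j) - \<phi> (path_end j)\<bar> \<le> int (path_len j)"
      using L_ge by (elim disjE) (auto simp: \<phi>_def cut_at_def path_start_def path_end_def path_len_def)
  qed (use m r' r'' in \<open>auto simp: cut_at_def split: if_splits\<close>)
  then show False
    using less_5_cases[OF m] L_ge
    by (elim disjE) (auto simp: \<phi>_def int_stretch path_start_def path_end_def path_len_def)
qed

lemma card_missing_edges_le_broken_paths:
  assumes sp: "is_spanner n stretch edges H" and n: "num_vertices \<le> n"
  shows "card (edges - H) \<le> (\<Sum>j<10. of_bool (broken H j))"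
proof -
  define B where "B j = {i. i < path_len j \<and> path_edge j i \<notin> H}" for j
  have fin: "finite (B j)" for j
    unfolding B_def by simp
  have card_B: "card (B j) \<le> of_bool (broken H j)" if "j < 10" for j
  proof -
    have "card (B j) \<le> Suc 0"
      unfolding card_le_Suc0_iff_eq[OF fin]
    proof (intro ballI)
      fix p q
      assume "p \<in> B j" "q \<in> B j"
      then show "p = q"
        using spanner_misses_at_most_one_edge_per_path[OF sp n that]
        by (cases p q rule: linorder_cases) (auto simp: B_def)
    qed
    moreover have "B j = {}" if "\<not> broken H j"
      using that by (auto simp: B_def broken_def)
    ultimately show ?thesis by auto
  qed
  have "edges - H \<subseteq> (\<lambda>(j, i). path_edge j i) ` (SIGMA j:{..<10}. B j)"
  proof
    fix e
    assume "e \<in> edges - H"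
    then obtain j i where "j < 10" "i < path_len j" "e = path_edge j i" "path_edge j i \<notin> H"
      unfolding edges_def by blast
    then show "e \<in> (\<lambda>(j, i). path_edge j i) ` (SIGMA j:{..<10}. B j)"
      unfolding B_def by force
  qed
  then have "card (edges - H) \<le> card ((\<lambda>(j, i). path_edge j i) ` (SIGMA j:{..<10}. B j))"
    by (intro card_mono) (auto simp: fin)
  also have "\<dots> \<le> card (SIGMA j:{..<10}. B j)"
    by (rule card_image_le) (auto simp: fin)
  also have "\<dots> = (\<Sum>j<10. card (B j))"
    by (simp add: fin)
  also have "\<dots> \<le> (\<Sum>j<10. of_bool (broken H j))"
    by (intro sum_mono card_B) simp
  finally show ?thesis .
qed

lemma spanner_missing_side_edge_card:
  assumes sp: "is_spanner n stretch edges H" and n: "num_vertices \<le> n"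
    and side: "j < 5" "i < t" "path_edge j i \<notin> H"
  shows "card (edges - H) \<le> 4"
proof -
  have "(\<Sum>j<10. of_bool (broken H j) :: nat) \<le> 4"
  proof (rule count_broken_paths_le_4)
    show "\<exists>m<5. broken H m"
      using side by (auto simp: broken_def path_len_def)
  qed (use broken_chord_imp_intact_side[OF sp n] broken_chord_imp_intact_next_side[OF sp n]
      not_three_consecutive_sides_broken[OF sp n] in auto)
  then show ?thesis
    using card_missing_edges_le_broken_paths[OF sp n] by linarith
qed

section \<open>Minimum spanners of the subdivided \<open>K\<^sub>5\<close>\<close>

definition first_chord_edges :: "nat set set" where
  "first_chord_edges = (\<lambda>m. path_edge (5 + m) 0) ` {..<5}"

lemma first_chord_edge: "m < 5 \<Longrightarrow> path_edge (5 + m) 0 = {m, path_base (5 + m) + 1}"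
  using L_ge_3 by (simp add: path_edge_def path_vertex_def path_start_def path_len_def)

lemma path_vertex_eq_internal:
  assumes "j < 10" "i \<le> path_len j" "j' < 10" "0 < i'" "i' < path_len j'"
    and "path_vertex j i = path_base j' + i'"
  shows "j = j'" "i = i'"
proof -
  have "5 \<le> path_base j' + i'"
    using internal_vertex_bounds[of j' i'] assms by simp
  then have "0 < i" "i < path_len j" "path_vertex j i = path_base j + i"
    using assms path_start_lt[of j] path_end_lt[of j]
    by (auto simp: path_vertex_def split: if_splits)
  then show "j = j'" "i = i'"
    using path_of_internal_vertex[of j i] path_of_internal_vertex[of j' i'] assms by metis+
qed

lemma path_edge_in_first_chord_edges:
  assumes "j < 10" "i < path_len j" "path_edge j i \<in> first_chord_edges"
  shows "5 \<le> j \<and> i = 0"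
proof -
  obtain m where m: "m < 5" "path_edge j i = {m, path_base (5 + m) + 1}"
    using assms first_chord_edge unfolding first_chord_edges_def by auto
  have one: "0 < (1::nat)" "1 < path_len (5 + m)"
    using L_ge_3 by (auto simp: path_len_def)
  have "path_vertex j i = path_base (5 + m) + 1 \<or> path_vertex j (Suc i) = path_base (5 + m) + 1"
    using m by (auto simp: path_edge_def doubleton_eq_iff)
  then show ?thesis
  proof
    assume "path_vertex j i = path_base (5 + m) + 1"
    then have ji: "j = 5 + m" "i = 1"
      using path_vertex_eq_internal[of j i "5 + m" 1] assms m one by auto
    then have "path_vertex j 2 = path_base (5 + m) + 2"
      using L_ge_3 by (simp add: path_vertex_def path_len_def)
    moreover have "path_vertex j 2 \<in> {m, path_base (5 + m) + 1}"
      using m(2) ji by (auto simp: path_edge_def numeral_2_eq_2)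
    ultimately show ?thesis
      using m by (auto simp: path_base_def)
  next
    assume "path_vertex j (Suc i) = path_base (5 + m) + 1"
    then show ?thesis
      using path_vertex_eq_internal[of j "Suc i" "5 + m" 1] assms m one by auto
  qed
qed

lemma card_first_chord_edges: "card first_chord_edges = 5"
proof -
  have "inj_on (\<lambda>m. path_edge (5 + m) 0) {..<5}"
  proof (rule inj_onI)
    fix m m'
    assume "m \<in> {..<5}" "m' \<in> {..<5}" "path_edge (5 + m) 0 = path_edge (5 + m') 0"
    then show "m = m'"
      using first_chord_edge[of m] first_chord_edge[of m'] by (auto simp: path_base_def doubleton_eq_iff)
  qed
  then show ?thesis
    unfolding first_chord_edges_def by (simp add: card_image)
qed

lemma first_chord_edges_subset: "first_chord_edges \<subseteq> edges"
  unfolding first_chord_edges_def using L_ge_3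
  by (auto intro!: path_edge_in_edges simp: path_len_def)

lemma dist_along_path:
  assumes "a \<le> b" and "\<And>i. a \<le> i \<Longrightarrow> i < b \<Longrightarrow> path_edge j i \<in> H"
  shows "dist H (path_vertex j a) (path_vertex j b) \<le> enat (b - a)"
proof -
  have "is_walk H (map (path_vertex j) [a..<Suc b])"
    using assms unfolding path_edge_def by (rule is_walk_map_upt)
  then show ?thesis
    using dist_le_walk assms(1) by (fastforce simp: hd_map last_map hd_upt simp del: upt_Suc)
qed

lemma first_chord_edge_detour:
  assumes m: "m < 5"
    and H: "\<And>j i. j < 10 \<Longrightarrow> i < path_len j \<Longrightarrow> j < 5 \<or> 0 < i \<Longrightarrow> path_edge j i \<in> H"
  shows "dist H m (path_base (5 + m) + 1) \<le> enat stretch"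
proof -
  define m' where "m' = (m + 1) mod 5"
  have m': "m' < 5" "path_start m' = path_end m" "path_end m' = path_end (5 + m)"
    unfolding m'_def using less_5_cases[OF m]
    by (auto simp: path_start_def path_end_def)
  have len: "path_len m = t" "path_len m' = t" "path_len (5 + m) = L"
    using m m' by (auto simp: path_len_def)
  have side: "dist H m (path_end m) \<le> enat t"
    using dist_along_path[of 0 t m H] H[of m] path_vertex_path_len[of m] m len
    by (simp add: path_start_def)
  have next_side: "dist H (path_end m) (path_end (5 + m)) \<le> enat t"
    using dist_along_path[of 0 t m' H] H[of m'] path_vertex_path_len[of m'] m' len by simp
  have chord: "dist H (path_end (5 + m)) (path_base (5 + m) + 1) \<le> enat (L - 1)"
    using dist_along_path[of 1 L "5 + m" H] H[of "5 + m"] path_vertex_path_len[of "5 + m"] m len L_ge_3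
    by (simp add: dist_commute path_vertex_internal)
  have "dist H m (path_base (5 + m) + 1)
      \<le> dist H m (path_end m) + dist H (path_end m) (path_base (5 + m) + 1)"
    by (rule dist_triangle)
  also have "\<dots> \<le> dist H m (path_end m)
      + (dist H (path_end m) (path_end (5 + m)) + dist H (path_end (5 + m)) (path_base (5 + m) + 1))"
    by (intro add_left_mono dist_triangle)
  also have "\<dots> \<le> enat t + (enat t + enat (L - 1))"
    using side next_side chord by (intro add_mono)
  also have "\<dots> \<le> enat stretch"
    using L_ge t_pos by (simp add: stretch_def)
  finally show ?thesis .
qed

lemma is_spanner_without_first_chord_edges: "is_spanner n stretch edges (edges - first_chord_edges)"
proof (rule is_spannerI_edgewise)
  show "stretch > 0"
    using L_ge_3 by (simp add: stretch_def)
  have kept: "path_edge j i \<in> edges - first_chord_edges" if "j < 10" "i < path_len j" "j < 5 \<or> 0 < i"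
    for j i
    using that path_edge_in_first_chord_edges[of j i] path_edge_in_edges[of j i] by auto
  fix a b
  assume ab: "{a, b} \<in> edges"
  show "dist (edges - first_chord_edges) a b \<le> enat stretch"
  proof (cases "{a, b} \<in> first_chord_edges")
    case False
    with ab have "dist (edges - first_chord_edges) a b \<le> enat 1"
      using dist_le_walk[of _ "[a, b]"] by (simp add: is_walk_Cons_Cons)
    also have "\<dots> \<le> enat stretch"
      using L_ge_3 by (simp add: stretch_def)
    finally show ?thesis .
  next
    case True
    then obtain m where m: "m < 5" "{a, b} = {m, path_base (5 + m) + 1}"
      unfolding first_chord_edges_def using first_chord_edge by auto
    then show ?thesis
      using first_chord_edge_detour[OF m(1) kept] dist_commute by (auto simp: doubleton_eq_iff)
  qed
qed (simp)

lemma card_min_spanner_le: "is_min_spanner n stretch edges H \<Longrightarrow> card H + 5 \<le> card edges"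
proof -
  assume "is_min_spanner n stretch edges H"
  then have "card H \<le> card (edges - first_chord_edges)"
    using is_spanner_without_first_chord_edges unfolding is_min_spanner_def by blast
  also have "\<dots> = card edges - 5"
    using first_chord_edges_subset finite_edges card_first_chord_edges
    by (simp add: card_Diff_subset finite_subset)
  finally show ?thesis
    using card_mono[OF finite_edges first_chord_edges_subset] card_first_chord_edges by linarith
qed

lemma min_spanner_contains_sides:
  assumes min: "is_min_spanner n stretch edges H" and n: "num_vertices \<le> n"
    and side: "j < 5" "i < t"
  shows "path_edge j i \<in> H"
proof (rule ccontr)
  assume "path_edge j i \<notin> H"
  have sp: "is_spanner n stretch edges H"
    using min unfolding is_min_spanner_def by simp
  then have "H \<subseteq> edges"
    unfolding is_spanner_def by simp
  then have "card edges = card H + card (edges - H)"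
    using finite_edges by (metis card_Diff_subset card_mono finite_subset le_add_diff_inverse)
  moreover have "card (edges - H) \<le> 4"
    using spanner_missing_side_edge_card[OF sp n side] \<open>path_edge j i \<notin> H\<close> .
  ultimately show False
    using card_min_spanner_le[OF min] by linarith
qed

definition pentagon_vertex :: "nat \<Rightarrow> nat" where
  "pentagon_vertex q = (if q mod t = 0 then q div t else 5 + q)"

lemma pentagon_vertex_path_vertex:
  assumes "j < 5" "i < t"
  shows "pentagon_vertex (j * t + i) = path_vertex j i"
proof (cases "i = 0")
  case True
  then show ?thesis
    using assms t_pos by (simp add: pentagon_vertex_def path_start_def)
next
  case False
  then show ?thesis
    using assms by (simp add: pentagon_vertex_def path_vertex_def path_base_def path_len_def)
qed

lemma pentagon_vertex_path_end:
  assumes "j < 5"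
  shows "pentagon_vertex ((j + 1) * t mod (5 * t)) = path_vertex j t"
proof -
  have "path_vertex j t = (j + 1) mod 5"
    using path_vertex_path_len[of j] assms by (simp add: path_len_def path_end_def)
  moreover have "(j + 1) * t mod (5 * t) = ((j + 1) mod 5) * t"
    using assms t_pos by (cases "j = 4") auto
  ultimately show ?thesis
    using t_pos by (simp add: pentagon_vertex_def)
qed

lemma inj_on_pentagon_vertex: "inj_on pentagon_vertex {..<5 * t}"
proof (rule inj_onI)
  fix q q'
  assume "q \<in> {..<5 * t}" "q' \<in> {..<5 * t}" and eq: "pentagon_vertex q = pentagon_vertex q'"
  then have "q div t < 5" "q' div t < 5"
    by (auto simp: less_mult_imp_div_less mult.commute)
  with eq show "q = q'"
    using div_mult_mod_eq[of q t] div_mult_mod_eq[of q' t]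
    by (cases "q mod t = 0"; cases "q' mod t = 0") (auto simp: pentagon_vertex_def)
qed

lemma is_cycle_pentagon:
  assumes sides: "\<And>j i. j < 5 \<Longrightarrow> i < t \<Longrightarrow> path_edge j i \<in> H"
  shows "is_cycle H (map pentagon_vertex [0..<5 * t])"
  unfolding is_cycle_def
proof (intro conjI allI impI)
  show "distinct (map pentagon_vertex [0..<5 * t])"
    using inj_on_pentagon_vertex by (simp add: distinct_map atLeast0LessThan)
  show "3 \<le> length (map pentagon_vertex [0..<5 * t])"
    using t_pos by simp
  fix q
  assume "q < length (map pentagon_vertex [0..<5 * t])"
  then have q: "q < 5 * t" by simp
  define j where "j = q div t"
  define i where "i = q mod t"
  have ji: "j < 5" "i < t" "q = j * t + i"
    using q t_pos unfolding j_def i_def by (auto simp: less_mult_imp_div_less mult.commute)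
  have "pentagon_vertex ((q + 1) mod (5 * t)) = path_vertex j (Suc i)"
  proof (cases "Suc i < t")
    case True
    have "(j + 1) * t \<le> 5 * t"
      using ji by (intro mult_le_mono1) simp
    moreover have "(j + 1) * t = j * t + t"
      by simp
    ultimately have "j * t + Suc i < 5 * t"
      using True by linarith
    then show ?thesis
      using ji True pentagon_vertex_path_vertex[of j "Suc i"] by simp
  next
    case False
    then have "Suc i = t"
      using ji by simp
    moreover have "q + 1 = (j + 1) * t"
      using ji \<open>Suc i = t\<close> by simp
    ultimately show ?thesis
      using pentagon_vertex_path_end[OF ji(1)] by (simp only:)
  qed
  then show "{map pentagon_vertex [0..<5 * t] ! q,
      map pentagon_vertex [0..<5 * t] ! ((q + 1) mod length (map pentagon_vertex [0..<5 * t]))} \<in> H"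
    using sides[OF ji(1,2)] pentagon_vertex_path_vertex[OF ji(1,2)] q ji(3)
    by (simp add: path_edge_def)
qed

lemma girth_min_spanner:
  assumes "is_min_spanner n stretch edges H" "num_vertices \<le> n"
  shows "girth H < enat (stretch + 2)"
proof -
  have "girth H \<le> enat (5 * t)"
    using girth_le_cycle[OF is_cycle_pentagon] min_spanner_contains_sides[OF assms] by fastforce
  also have "\<dots> < enat (stretch + 2)"
    using L_ge t_pos by (simp add: stretch_def)
  finally show ?thesis .
qed

lemma not_good_stretch:
  assumes "num_vertices \<le> n"
  shows "\<not> good n stretch"
proof
  assume "good n stretch"
  then obtain H where H: "is_min_spanner n stretch edges H" "enat (stretch + 2) \<le> girth H"
    using is_graph_edges[OF assms] unfolding good_def by blast
  then show False
    using leD[OF H(2)] girth_min_spanner[OF H(1) assms] by blast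
qed

end

lemma not_good:
  fixes n k :: nat
  assumes "4 < k" "3 * k + 24 < n"
  shows "\<not> good n k"
proof -
  define t where "t = (k + 1) div 5"
  define L where "L = k + 2 - 3 * t"
  text \<open>Then \<open>5 t \<le> k + 1 < 5 t + 5\<close>, which gives \<open>L \<ge> 2 t + 1\<close> and at most \<open>3 k + 21\<close>
    vertices.\<close>
  have t: "1 \<le> t" "5 * t \<le> k + 1" "k + 1 < 5 * t + 5"
    using assms(1) unfolding t_def by linarith+
  interpret subdivided_K5 t L
    using t by unfold_locales (auto simp: L_def)
  have "stretch = k"
    using stretch_def t unfolding L_def by linarith
  moreover have "num_vertices \<le> n"
    using num_vertices_def t assms(2) unfolding L_def by linarith
  ultimately show ?thesis
    using not_good_stretch by blast
qed

theorem theorem1p6: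
  shows "\<exists>c1 c2 :: real. c1 > 0 \<and> c2 > 0 \<and> (\<exists>N :: nat. \<forall>n \<ge> N. \<forall>k :: nat.
           c1 < real k \<and> real k < real n / 3 - c2 \<longrightarrow> \<not> good n k)"
proof (intro exI conjI)
  show "\<forall>n \<ge> 0. \<forall>k :: nat. 4 < real k \<and> real k < real n / 3 - 8 \<longrightarrow> \<not> good n k"
  proof (intro allI impI)
    fix n k :: nat
    assume "4 < real k \<and> real k < real n / 3 - 8"
    then have "4 < k" "3 * k + 24 < n"
      by linarith+
    then show "\<not> good n k"
      by (rule not_good)
  qed
qed simp_all

end
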